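(* Let $G$ be a $d$-regular graph of girth at least 7. Then for every integer $1\le k<d$ and every set $S$ of $k$ vertices, $|N^2(S)|\ge\frac{kd^2}{2}$.
   Context: For a set $S$ of vertices, $N^2(S)$ denotes the set of vertices at distance exactly 2 from some vertex of $S$ (not required to be disjoint from $S$). The girth is the length of a shortest cycle. *)

theory Defs
  imports Complex_Main "HOL-Library.Extended_Nat"
begin

definition sgraph :: "'a set \<Rightarrow> ('a \<Rightarrow> 'a \<Rightarrow> bool) \<Rightarrow> bool" where
  "sgraph V E \<longleftrightarrow> finite V \<and> (\<forall>u v. E u v \<longrightarrow> u \<in> V \<and> v \<in> V)
     \<and> (\<forall>u v. E u v \<longrightarrow> E v u) \<and> (\<forall>v. \<not> E v v)"

definition degree :: "'a set \<Rightarrow> ('a \<Rightarrow> 'a \<Rightarrow> bool) \<Rightarrow> 'a \<Rightarrow> nat" where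
  "degree V E v = card {u \<in> V. E v u}"

definition regular :: "'a set \<Rightarrow> ('a \<Rightarrow> 'a \<Rightarrow> bool) \<Rightarrow> nat \<Rightarrow> bool" where
  "regular V E d \<longleftrightarrow> (\<forall>v \<in> V. degree V E v = d)"

fun walk :: "'a set \<Rightarrow> ('a \<Rightarrow> 'a \<Rightarrow> bool) \<Rightarrow> 'a list \<Rightarrow> bool" where
  "walk V E [] = False"
| "walk V E [v] = (v \<in> V)"
| "walk V E (u # v # vs) = (u \<in> V \<and> E u v \<and> walk V E (v # vs))"

definition is_cycle :: "'a set \<Rightarrow> ('a \<Rightarrow> 'a \<Rightarrow> bool) \<Rightarrow> 'a list \<Rightarrow> bool" where
  "is_cycle V E cs \<longleftrightarrow> length cs \<ge> 3 \<and> distinct cs \<and> walk V E cs \<and> E (last cs) (hd cs)"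

text \<open>Girth: length of a shortest cycle (infinity if acyclic).\<close>
definition girth :: "'a set \<Rightarrow> ('a \<Rightarrow> 'a \<Rightarrow> bool) \<Rightarrow> enat" where
  "girth V E = (INF cs \<in> {cs. is_cycle V E cs}. enat (length cs))"

text \<open>Graph distance: number of edges of a shortest walk (infinity if none).\<close>
definition dist :: "'a set \<Rightarrow> ('a \<Rightarrow> 'a \<Rightarrow> bool) \<Rightarrow> 'a \<Rightarrow> 'a \<Rightarrow> enat" where
  "dist V E u v = (INF xs \<in> {xs. walk V E xs \<and> hd xs = u \<and> last xs = v}. enat (length xs - 1))"

definition N2 :: "'a set \<Rightarrow> ('a \<Rightarrow> 'a \<Rightarrow> bool) \<Rightarrow> 'a set \<Rightarrow> 'a set" where
  "N2 V E S = {v \<in> V. \<exists>s \<in> S. dist V E s v = 2}"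

end

theory Submission
  imports Defs
begin

text \<open>Write \<open>D(s)\<close> for \<open>N\<^sup>2({s})\<close>. Without cycles of length 3 and 4, the \<open>d(d-1)\<close> paths
  \<open>s - w - v\<close> of length 2 end in pairwise distinct vertices \<open>v \<in> D(s)\<close>, so \<open>|D(s)| \<ge> d(d-1)\<close>.
  Without cycles of length 4 and 6, two distinct vertices \<open>s, t\<close> satisfy \<open>|D(s) \<inter> D(t)| \<le> d\<close>:
  if they have a common neighbour \<open>w\<close>, then \<open>D(s) \<inter> D(t) \<subseteq> N(w)\<close>; otherwise every neighbour
  of \<open>s\<close> is adjacent to at most one vertex of \<open>D(s) \<inter> D(t)\<close>. Inclusion-exclusion to second
  order then gives \<open>|N\<^sup>2(S)| \<ge> kd(d-1) - (k choose 2) d\<close>, which is at least \<open>kd\<^sup>2/2\<close> because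
  \<open>k \<le> d - 1\<close>.\<close>

abbreviation neighbours :: "'a set \<Rightarrow> ('a \<Rightarrow> 'a \<Rightarrow> bool) \<Rightarrow> 'a \<Rightarrow> 'a set" where
  "neighbours V E v \<equiv> {u \<in> V. E v u}"

lemma sgraph_edgeD:
  assumes "sgraph V E" "E u v"
  shows "u \<in> V" "v \<in> V" "E v u" "u \<noteq> v"
  using assms unfolding sgraph_def by metis+

lemma card_neighbours_regular:
  assumes "regular V E d" "v \<in> V"
  shows "card (neighbours V E v) = d"
  using assms by (simp add: regular_def degree_def)

subsection \<open>Short cycles\<close>

lemma girth_le_cycle_length:
  assumes "is_cycle V E cs"
  shows "girth V E \<le> enat (length cs)"
  unfolding girth_def using assms by (auto intro: INF_lower)

lemma cycle_length_ge_girth: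
  assumes "girth V E \<ge> enat n" "is_cycle V E cs"
  shows "n \<le> length cs"
  using order_trans[OF assms(1) girth_le_cycle_length[OF assms(2)]] by simp

lemma no_triangle:
  assumes "sgraph V E" "girth V E \<ge> 4" "E a b" "E b c" "E c a"
  shows False
proof -
  have "is_cycle V E [a, b, c]"
    unfolding is_cycle_def using assms by (simp add: sgraph_edgeD[OF assms(1)])
  then have "4 \<le> length [a, b, c]"
    using assms(2) by (intro cycle_length_ge_girth) (simp_all add: numeral_eq_enat)
  then show False by simp
qed

lemma no_4_cycle:
  assumes "sgraph V E" "girth V E \<ge> 5" "E a b" "E b c" "E c e" "E e a" "a \<noteq> c" "b \<noteq> e"
  shows False
proof -
  have "is_cycle V E [a, b, c, e]"
    unfolding is_cycle_def using assms by (simp add: sgraph_edgeD[OF assms(1)])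
  then have "5 \<le> length [a, b, c, e]"
    using assms(2) by (intro cycle_length_ge_girth) (simp_all add: numeral_eq_enat)
  then show False by simp
qed

lemma no_6_cycle:
  assumes "sgraph V E" "girth V E \<ge> 7" "E a b" "E b c" "E c e" "E e f" "E f h" "E h a"
    "distinct [a, b, c, e, f, h]"
  shows False
proof -
  have "is_cycle V E [a, b, c, e, f, h]"
    unfolding is_cycle_def using assms by (simp add: sgraph_edgeD[OF assms(1)])
  then have "7 \<le> length [a, b, c, e, f, h]"
    using assms(2) by (intro cycle_length_ge_girth) (simp_all add: numeral_eq_enat)
  then show False by simp
qed

subsection \<open>Vertices at distance two\<close>

lemma walk_hd_in: "walk V E xs \<Longrightarrow> hd xs \<in> V"
  by (induct V E xs rule: walk.induct) auto

lemma walk_length_le_2: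
  "walk V E xs \<Longrightarrow> length xs \<le> 2 \<Longrightarrow> last xs = hd xs \<or> E (hd xs) (last xs)"
  by (induct V E xs rule: walk.induct) auto

lemma dist_le_walk_length:
  "walk V E xs \<Longrightarrow> dist V E (hd xs) (last xs) \<le> enat (length xs - 1)"
  unfolding dist_def by (auto intro: INF_lower)

lemma dist_enatE:
  assumes "dist V E u v = enat n"
  obtains xs where "walk V E xs" "hd xs = u" "last xs = v" "length xs = Suc n"
proof -
  let ?W = "{xs. walk V E xs \<and> hd xs = u \<and> last xs = v}"
  have "?W \<noteq> {}"
  proof
    assume "?W = {}"
    then have "dist V E u v = \<infinity>"
      unfolding dist_def \<open>?W = {}\<close> by (simp add: top_enat_def)
    with assms show False by simp
  qed
  then have "dist V E u v \<in> (\<lambda>xs. enat (length xs - 1)) ` ?W"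
    unfolding dist_def by (blast intro: wellorder_InfI)
  then obtain xs where "xs \<in> ?W" "n = length xs - 1"
    using assms by auto
  moreover from \<open>xs \<in> ?W\<close> have "xs \<noteq> []" by auto
  ultimately show thesis using that by auto
qed

lemma dist_eq_2_iff:
  assumes "sgraph V E"
  shows "dist V E s v = 2 \<longleftrightarrow> s \<noteq> v \<and> \<not> E s v \<and> (\<exists>w. E s w \<and> E w v)"
proof
  assume dist2: "dist V E s v = 2"
  then obtain xs where xs: "walk V E xs" "hd xs = s" "last xs = v" "length xs = 3"
    by (auto simp: numeral_eq_enat elim: dist_enatE)
  then obtain w where "xs = [s, w, v]"
    by (auto simp: numeral_3_eq_3 length_Suc_conv)
  with xs(1) have "E s w \<and> E w v" by simp
  moreover have "s \<noteq> v"
    using dist_le_walk_length[of V E "[s]"] walk_hd_in[OF xs(1)] xs(2) dist2 by auto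
  moreover have "\<not> E s v"
    using dist_le_walk_length[of V E "[s, v]"] sgraph_edgeD[OF assms] dist2
    by (auto simp: one_enat_def numeral_eq_enat)
  ultimately show "s \<noteq> v \<and> \<not> E s v \<and> (\<exists>w. E s w \<and> E w v)" by blast
next
  assume "s \<noteq> v \<and> \<not> E s v \<and> (\<exists>w. E s w \<and> E w v)"
  then obtain w where sv: "s \<noteq> v" "\<not> E s v" and w: "E s w" "E w v" by blast
  have "dist V E s v \<le> 2"
    using dist_le_walk_length[of V E "[s, w, v]"] w sgraph_edgeD[OF assms]
    by (simp add: numeral_eq_enat numeral_2_eq_2)
  then obtain n where n: "dist V E s v = enat n" "n \<le> 2"
    by (cases "dist V E s v") (auto simp: numeral_eq_enat)
  obtain xs where xs: "walk V E xs" "hd xs = s" "last xs = v" "length xs = Suc n"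
    by (rule dist_enatE[OF n(1)])
  have "\<not> n \<le> 1"
  proof
    assume "n \<le> 1"
    with xs walk_length_le_2[of V E xs] have "v = s \<or> E s v" by auto
    with sv show False by blast
  qed
  with n(2) have "n = 2" by simp
  with n(1) show "dist V E s v = 2" by (simp add: numeral_eq_enat)
qed

lemma mem_N2_singleton_iff:
  assumes "sgraph V E"
  shows "v \<in> N2 V E {s} \<longleftrightarrow> s \<noteq> v \<and> \<not> E s v \<and> (\<exists>w. E s w \<and> E w v)"
  unfolding N2_def using dist_eq_2_iff[OF assms] sgraph_edgeD[OF assms] by blast

lemma N2_eq_UN_singleton: "N2 V E S = (\<Union>s\<in>S. N2 V E {s})"
  by (auto simp: N2_def)

lemma finite_N2: "sgraph V E \<Longrightarrow> finite (N2 V E S)"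
  by (simp add: N2_def sgraph_def)

subsection \<open>The two counting estimates\<close>

lemma card_N2_singleton_ge:
  assumes sg: "sgraph V E" and reg: "regular V E d" and girth: "girth V E \<ge> 5" and "s \<in> V"
  shows "d * (d - 1) \<le> card (N2 V E {s})"
proof -
  have girth4: "girth V E \<ge> 4"
    by (rule order.trans[OF _ girth]) (simp add: numeral_eq_enat)
  have fin: "finite (neighbours V E v)" for v
    using sg by (simp add: sgraph_def)
  let ?P = "\<Union>w\<in>neighbours V E s. neighbours V E w - {s}"
  have "?P \<subseteq> N2 V E {s}"
  proof
    fix v assume "v \<in> ?P"
    then obtain w where "E s w" "E w v" "v \<noteq> s" by auto
    moreover have "\<not> E s v"
      using no_triangle[OF sg girth4 \<open>E s w\<close> \<open>E w v\<close>] sgraph_edgeD(3)[OF sg] by blast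
    ultimately show "v \<in> N2 V E {s}" by (auto simp: mem_N2_singleton_iff[OF sg])
  qed
  have disjoint: "(neighbours V E w - {s}) \<inter> (neighbours V E w' - {s}) = {}"
    if "E s w" "E s w'" "w \<noteq> w'" for w w'
  proof (rule ccontr)
    assume "(neighbours V E w - {s}) \<inter> (neighbours V E w' - {s}) \<noteq> {}"
    then obtain v where "E w v" "E w' v" "v \<noteq> s" by auto
    then show False
      using no_4_cycle[OF sg girth \<open>E s w\<close> \<open>E w v\<close> _ _ _ \<open>w \<noteq> w'\<close>] that(2) sgraph_edgeD(3)[OF sg]
      by blast
  qed
  have "card ?P = (\<Sum>w\<in>neighbours V E s. card (neighbours V E w - {s}))"
    using disjoint fin by (intro card_UN_disjoint) auto
  also have "\<dots> = (\<Sum>w\<in>neighbours V E s. d - 1)"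
  proof (rule sum.cong[OF refl])
    fix w assume "w \<in> neighbours V E s"
    then have "w \<in> V" "s \<in> neighbours V E w"
      using \<open>s \<in> V\<close> sgraph_edgeD(3)[OF sg] by auto
    then show "card (neighbours V E w - {s}) = d - 1"
      using card_neighbours_regular[OF reg] fin by (simp add: card_Diff_singleton)
  qed
  also have "\<dots> = d * (d - 1)"
    using card_neighbours_regular[OF reg \<open>s \<in> V\<close>] by simp
  finally have "card ?P = d * (d - 1)" .
  with card_mono[OF finite_N2[OF sg] \<open>?P \<subseteq> N2 V E {s}\<close>] show ?thesis by simp
qed

lemma N2_Int_subset_common_neighbour:
  assumes sg: "sgraph V E" and girth: "girth V E \<ge> 7"
    and "s \<noteq> t" "E s w" "E t w"
  shows "N2 V E {s} \<inter> N2 V E {t} \<subseteq> neighbours V E w"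
proof
  have girth5: "girth V E \<ge> 5"
    by (rule order.trans[OF _ girth]) (simp add: numeral_eq_enat)
  fix v assume "v \<in> N2 V E {s} \<inter> N2 V E {t}"
  then obtain a b where a: "E s a" "E a v" and b: "E t b" "E b v"
    and v: "s \<noteq> v" "t \<noteq> v" "\<not> E s v" "\<not> E t v"
    by (auto simp: mem_N2_singleton_iff[OF sg])
  show "v \<in> neighbours V E w"
  proof (rule ccontr)
    assume "v \<notin> neighbours V E w"
    with a(2) b(2) sgraph_edgeD(2)[OF sg a(2)] have "a \<noteq> w" "b \<noteq> w" by auto
    have ts: "E a t" if "a = b" using b(1) that sgraph_edgeD(3)[OF sg] by blast
    have ws: "E w s" using \<open>E s w\<close> sgraph_edgeD(3)[OF sg] by blast
    show False
    proof (cases "a = b")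
      case True
      from no_4_cycle[OF sg girth5 a(1) ts[OF True] \<open>E t w\<close> ws \<open>s \<noteq> t\<close> \<open>a \<noteq> w\<close>]
      show False .
    next
      case False
      have "distinct [s, a, v, b, t, w]"
        using a b v \<open>E s w\<close> \<open>E t w\<close> False \<open>a \<noteq> w\<close> \<open>b \<noteq> w\<close> \<open>s \<noteq> t\<close>
          sgraph_edgeD(4)[OF sg] by auto
      with no_6_cycle[OF sg girth a] b sgraph_edgeD(3)[OF sg] \<open>E t w\<close> ws show False
        by blast
    qed
  qed
qed

lemma N2_Int_unique_via_neighbour:
  assumes sg: "sgraph V E" and girth: "girth V E \<ge> 7"
    and no_common: "\<not> (\<exists>w. E s w \<and> E t w)"
    and x: "E s x" "E x v" "E x v'"
    and "v \<in> N2 V E {s} \<inter> N2 V E {t}" "v' \<in> N2 V E {s} \<inter> N2 V E {t}"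
  shows "v = v'"
proof (rule ccontr)
  assume "v \<noteq> v'"
  have girth4: "girth V E \<ge> 4" and girth5: "girth V E \<ge> 5"
    by (rule order.trans[OF _ girth], simp add: numeral_eq_enat)+
  obtain b b' where b: "E t b" "E b v" and b': "E t b'" "E b' v'"
    and v: "t \<noteq> v" "\<not> E t v" "t \<noteq> v'" "\<not> E t v'"
    using assms(7,8) by (auto simp: mem_N2_singleton_iff[OF sg])
  have sym: "E u w \<Longrightarrow> E w u" for u w
    using sgraph_edgeD(3)[OF sg] .
  have "x \<noteq> b" "x \<noteq> b'"
    using no_common x(1) b(1) b'(1) by auto
  show False
  proof (cases "b = b'")
    case True
    from no_4_cycle[OF sg girth5 x(2) sym[OF b(2)] _ sym[OF x(3)] \<open>x \<noteq> b\<close> \<open>v \<noteq> v'\<close>] b'(2) True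
    show False by blast
  next
    case False
    have "v \<noteq> b'" "b \<noteq> v'"
      using no_triangle[OF sg girth4 x(2) _ sym[OF x(3)]] no_triangle[OF sg girth4 x(3) _ sym[OF x(2)]]
        b(2) b'(2) sym by blast+
    then have "distinct [x, v, b, t, b', v']"
      using x b b' v False \<open>x \<noteq> b\<close> \<open>x \<noteq> b'\<close> \<open>v \<noteq> v'\<close> sgraph_edgeD(4)[OF sg] by auto
    with no_6_cycle[OF sg girth x(2) sym[OF b(2)] sym[OF b(1)] b'(1) b'(2) sym[OF x(3)]]
    show False by blast
  qed
qed

lemma card_N2_Int_le:
  assumes sg: "sgraph V E" and reg: "regular V E d" and girth: "girth V E \<ge> 7"
    and "s \<in> V" "s \<noteq> t"
  shows "card (N2 V E {s} \<inter> N2 V E {t}) \<le> d"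
proof (cases "\<exists>w. E s w \<and> E t w")
  case True
  then obtain w where "E s w" "E t w" by blast
  have "card (N2 V E {s} \<inter> N2 V E {t}) \<le> card (neighbours V E w)"
    using N2_Int_subset_common_neighbour[OF sg girth \<open>s \<noteq> t\<close> \<open>E s w\<close> \<open>E t w\<close>] sg
    by (intro card_mono) (simp_all add: sgraph_def)
  also have "\<dots> = d"
    using card_neighbours_regular[OF reg sgraph_edgeD(2)[OF sg \<open>E s w\<close>]] .
  finally show ?thesis .
next
  case False
  let ?I = "N2 V E {s} \<inter> N2 V E {t}"
  have fin: "finite (neighbours V E s)"
    using sg by (simp add: sgraph_def)
  have "?I = (\<Union>x\<in>neighbours V E s. neighbours V E x \<inter> ?I)"
    using sgraph_edgeD(2)[OF sg] by (auto simp: mem_N2_singleton_iff[OF sg]) blast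
  then have "card ?I = card (\<Union>x\<in>neighbours V E s. neighbours V E x \<inter> ?I)"
    by (rule arg_cong)
  also have "\<dots> \<le> (\<Sum>x\<in>neighbours V E s. card (neighbours V E x \<inter> ?I))"
    by (rule card_UN_le[OF fin])
  also have "\<dots> \<le> (\<Sum>x\<in>neighbours V E s. 1)"
  proof (rule sum_mono)
    fix x assume "x \<in> neighbours V E s"
    have "finite (neighbours V E x \<inter> ?I)"
      using finite_N2[OF sg] by blast
    with \<open>x \<in> neighbours V E s\<close> show "card (neighbours V E x \<inter> ?I) \<le> 1"
      using N2_Int_unique_via_neighbour[OF sg girth False]
      by (auto simp only: One_nat_def card_le_Suc0_iff_eq)
  qed
  also have "\<dots> = d"
    using card_neighbours_regular[OF reg \<open>s \<in> V\<close>] by simp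
  finally show ?thesis .
qed

lemma card_UN_ge_pairwise_Int_le:
  assumes "finite F"
    and "\<And>s. s \<in> F \<Longrightarrow> finite (A s)"
    and "\<And>s. s \<in> F \<Longrightarrow> a \<le> card (A s)"
    and "\<And>s t. s \<in> F \<Longrightarrow> t \<in> F \<Longrightarrow> s \<noteq> t \<Longrightarrow> card (A s \<inter> A t) \<le> b"
  shows "card F * a \<le> card (\<Union>s\<in>F. A s) + b * (card F choose 2)"
  using assms
proof (induction F rule: finite_induct)
  case empty
  then show ?case by simp
next
  case (insert x F)
  let ?U = "\<Union>s\<in>F. A s"
  have IH: "card F * a \<le> card ?U + b * (card F choose 2)"
    using insert.IH insert.prems by blast
  have "card (A x \<inter> ?U) \<le> (\<Sum>s\<in>F. card (A x \<inter> A s))"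
    unfolding Int_UN_distrib by (rule card_UN_le[OF insert.hyps(1)])
  also have "\<dots> \<le> (\<Sum>s\<in>F. b)"
    using insert.prems(3) insert.hyps(2) by (intro sum_mono) auto
  finally have overlap: "card (A x \<inter> ?U) \<le> card F * b" by simp
  have "card (A x) + card ?U = card (A x \<union> ?U) + card (A x \<inter> ?U)"
    using insert.prems(1) insert.hyps(1) by (intro card_Un_Int) auto
  moreover have "a \<le> card (A x)"
    using insert.prems(2) by blast
  moreover have "Suc (card F) choose 2 = (card F choose 2) + card F"
    by (simp add: numeral_2_eq_2)
  ultimately show ?case
    using IH overlap insert.hyps by (simp add: algebra_simps)
qed

lemma real_choose_two: "real (n choose 2) = real n * (real n - 1) / 2"
  by (induction n) (simp_all add: numeral_2_eq_2 field_simps)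

theorem lemma5:
  fixes V :: "'a set" and E :: "'a \<Rightarrow> 'a \<Rightarrow> bool" and d k :: nat and S :: "'a set"
  assumes "sgraph V E"
    and "regular V E d"
    and "girth V E \<ge> 7"
    and "1 \<le> k" and "k < d"
    and "S \<subseteq> V" and "card S = k"
  shows "real (card (N2 V E S)) \<ge> real k * real d ^ 2 / 2"
proof -
  have "finite S"
    using assms(1,6) finite_subset by (auto simp: sgraph_def)
  have girth5: "girth V E \<ge> 5"
    by (rule order.trans[OF _ assms(3)]) (simp add: numeral_eq_enat)
  have "k * (d * (d - 1)) \<le> card (N2 V E S) + d * (k choose 2)"
    unfolding N2_eq_UN_singleton[of V E S] assms(7)[symmetric]
    using card_N2_singleton_ge[OF assms(1,2) girth5] card_N2_Int_le[OF assms(1-3)]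
      finite_N2[OF assms(1)] \<open>finite S\<close> assms(6)
    by (intro card_UN_ge_pairwise_Int_le) auto
  then have "real (k * (d * (d - 1))) \<le> real (card (N2 V E S) + d * (k choose 2))"
    by (rule of_nat_mono)
  then have "real k * (real d * (real d - 1)) \<le> real (card (N2 V E S)) + real d * (real k * (real k - 1) / 2)"
    using assms(5) by (simp add: of_nat_diff real_choose_two)
  moreover have "0 \<le> real k * real d * (real d - real k - 1)"
    using assms(5) by simp
  moreover have "real k * real d ^ 2 / 2 + real k * real d * (real d - real k - 1) / 2
      = real k * (real d * (real d - 1)) - real d * (real k * (real k - 1) / 2)"
    by (simp add: field_simps power2_eq_square)
  ultimately show ?thesis by linarith
qed

end
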